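(* Let $\omega\in\Omega^q(\log\mathscr{X}/\mathscr{C})$ and $\theta\in\mathrm{Der}(-\log\mathscr{X})$. Then the contraction $\langle\omega,\theta\rangle$ belongs to $\Omega^{q-1}(\log\mathscr{X}/\mathscr{C})$.
   Context: $V=\mathbb{C}^\ell$, $S=\mathbb{C}[x_1,\dots,x_\ell]$, $\Omega^q$ the module of polynomial $q$-forms. $\mathscr{X}$ is a central equidimensional subspace arrangement of codimension $k$ (finite set of linear subspaces of codimension $k$) with radical ideal $\mathcal{I}_\mathscr{X}$; $\mathscr{C}\supseteq\mathscr{X}$ is a reduced complete intersection subspace arrangement of codimension $k$ with $\mathcal{I}_\mathscr{C}=(h_1,\dots,h_k)$ radical, $h_1,\dots,h_k\in\mathcal{I}_\mathscr{X}$ a homogeneous regular sequence, $h=h_1\cdots h_k$. $\Omega^q(\log\mathscr{X}/\mathscr{C})=\{\omega\in\frac1h\Omega^q:\ \mathcal{I}_\mathscr{X}\omega\subseteq\frac1h\mathcal{I}_\mathscr{C}\Omega^q,\ d(\mathcal{I}_\mathscr{X})\wedge\omega\subseteq\frac1h\mathcal{I}_\mathscr{C}\Omega^{q+1}\}$. $\mathrm{Der}(-\log\mathscr{X})=\{\delta$ polynomial vector field : $\delta(\mathcal{I}_\mathscr{X})\subseteq\mathcal{I}_\mathscr{X}\}$. *)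

theory Defs
  imports "HOL-Analysis.Analysis" "HOL-Library.Poly_Mapping"
begin

text \<open>Polynomials in S = C[x_i : i in 'n] (ell = CARD('n) variables), as finitely
  supported maps from exponent vectors (monomials) to coefficients.\<close>
type_synonym 'n mpoly = "('n \<Rightarrow>\<^sub>0 nat) \<Rightarrow>\<^sub>0 complex"

definition mp_eval :: "'n mpoly \<Rightarrow> complex ^ 'n \<Rightarrow> complex" where
  "mp_eval p v = (\<Sum>m\<in>Poly_Mapping.keys p. Poly_Mapping.lookup p m * (\<Prod>i\<in>Poly_Mapping.keys (m::'n \<Rightarrow>\<^sub>0 nat). (v $ i) ^ Poly_Mapping.lookup m i))"

definition mp_pderiv :: "'n \<Rightarrow> 'n mpoly \<Rightarrow> 'n mpoly" where
  "mp_pderiv i p = (\<Sum>m\<in>Poly_Mapping.keys p.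
      Poly_Mapping.single (m - Poly_Mapping.single i 1) (Poly_Mapping.lookup p m * of_nat (Poly_Mapping.lookup m i)))"

definition mp_homogeneous :: "('n::finite) mpoly \<Rightarrow> bool" where
  "mp_homogeneous p \<longleftrightarrow> (\<exists>d. \<forall>m\<in>Poly_Mapping.keys p. (\<Sum>i\<in>UNIV. Poly_Mapping.lookup m i) = d)"

definition vanishing_ideal :: "(complex ^ 'n) set \<Rightarrow> 'n mpoly set" where
  "vanishing_ideal Z = {p. \<forall>v\<in>Z. mp_eval p v = 0}"

definition gen_ideal :: "(nat \<Rightarrow> 'n mpoly) \<Rightarrow> nat \<Rightarrow> 'n mpoly set" where
  "gen_ideal h j = {p. \<exists>a. p = (\<Sum>i<j. a i * h i)}"

definition radical :: "'n mpoly set \<Rightarrow> bool" where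
  "radical I \<longleftrightarrow> (\<forall>p n. 0 < n \<longrightarrow> p ^ n \<in> I \<longrightarrow> p \<in> I)"

definition regular_sequence :: "(nat \<Rightarrow> 'n mpoly) \<Rightarrow> nat \<Rightarrow> bool" where
  "regular_sequence h k \<longleftrightarrow> 1 \<notin> gen_ideal h k \<and>
     (\<forall>j<k. \<forall>a. a * h j \<in> gen_ideal h j \<longrightarrow> a \<in> gen_ideal h j)"

definition codim_subspace :: "nat \<Rightarrow> (complex ^ ('n::finite)) set \<Rightarrow> bool" where
  "codim_subspace k L \<longleftrightarrow> vec.subspace L \<and> vec.dim L + k = CARD('n)"

text \<open>Polynomial q-forms: a q-form is given by its coefficients omega S of dx_S,
  S ranging over q-element subsets of the variables (dx_S = wedge of dx_i, i in S, increasing).\<close>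
type_synonym 'n form = "'n set \<Rightarrow> 'n mpoly"

definition is_form :: "nat \<Rightarrow> ('n::finite) form \<Rightarrow> bool" where
  "is_form q w \<longleftrightarrow> (\<forall>S. card S \<noteq> q \<longrightarrow> w S = 0)"

definition pos_sign :: "'n::linorder set \<Rightarrow> 'n \<Rightarrow> complex" where
  "pos_sign S i = (-1) ^ card {j\<in>S. j < i}"

definition d_wedge :: "('n::{finite,linorder}) mpoly \<Rightarrow> 'n form \<Rightarrow> 'n form" where
  "d_wedge f w T = (\<Sum>i\<in>T. Poly_Mapping.single 0 (pos_sign T i) * mp_pderiv i f * w (T - {i}))"

definition contraction :: "('n::{finite,linorder}) form \<Rightarrow> ('n \<Rightarrow> 'n mpoly) \<Rightarrow> 'n form" where
  "contraction w \<theta> S = (\<Sum>i\<in>UNIV - S. Poly_Mapping.single 0 (pos_sign S i) * \<theta> i * w (insert i S))"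

definition vf_apply :: "('n::finite \<Rightarrow> 'n mpoly) \<Rightarrow> 'n mpoly \<Rightarrow> 'n mpoly" where
  "vf_apply \<theta> f = (\<Sum>i\<in>UNIV. \<theta> i * mp_pderiv i f)"

definition form_in :: "'n mpoly set \<Rightarrow> 'n form \<Rightarrow> bool" where
  "form_in I w \<longleftrightarrow> (\<forall>S. w S \<in> I)"

text \<open>Omega^q(log X/C): we represent a rational form omega in (1/h) Omega^q by its
  numerator eta = h * omega in Omega^q.  Then
  I_X omega in (1/h) I_C Omega^q iff I_X eta in I_C Omega^q, and
  d(I_X) wedge omega in (1/h) I_C Omega^(q+1) iff d(I_X) wedge eta in I_C Omega^(q+1).\<close>
definition log_forms_num :: "'n mpoly set \<Rightarrow> 'n mpoly set \<Rightarrow> nat \<Rightarrow> ('n::{finite,linorder}) form set" where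
  "log_forms_num IX IC q = {\<eta>. is_form q \<eta> \<and>
      (\<forall>f\<in>IX. form_in IC (\<lambda>S. f * \<eta> S)) \<and>
      (\<forall>f\<in>IX. form_in IC (d_wedge f \<eta>))}"

definition der_log :: "'n mpoly set \<Rightarrow> ('n::finite \<Rightarrow> 'n mpoly) set" where
  "der_log IX = {\<theta>. \<forall>f\<in>IX. vf_apply \<theta> f \<in> IX}"

end

theory Submission
  imports Defs
begin

text \<open>Contraction with \<open>\<theta>\<close> is an antiderivation, so
  \<open>df \<and> \<langle>\<eta>,\<theta>\<rangle> + \<langle>df \<and> \<eta>,\<theta>\<rangle> = \<theta>(f) \<eta>\<close>.
  For \<open>f \<in> I\<^sub>X\<close> the right-hand side lies in \<open>I\<^sub>C \<Omega>\<close> because \<open>\<theta>(f) \<in> I\<^sub>X\<close>, and so does the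
  second summand on the left because \<open>df \<and> \<eta>\<close> does and contraction preserves \<open>I\<^sub>C \<Omega>\<close>;
  hence \<open>df \<and> \<langle>\<eta>,\<theta>\<rangle> \<in> I\<^sub>C \<Omega>\<close>.\<close>

lemma pos_sign_remove_self: "pos_sign (T - {i}) i = pos_sign T i"
  unfolding pos_sign_def by (rule arg_cong[where f = "\<lambda>S. (-1) ^ card S"]) auto

lemma pos_sign_insert_self: "pos_sign (insert j T) j = pos_sign T j"
  unfolding pos_sign_def by (rule arg_cong[where f = "\<lambda>S. (-1) ^ card S"]) auto

lemma pos_sign_remove:
  assumes "finite T" "i \<in> T" "j \<noteq> i"
  shows "pos_sign T j = (if i < j then -1 else 1) * pos_sign (T - {i}) j"
proof (cases "i < j")
  case True
  then have "{x\<in>T. x < j} = insert i {x\<in>T - {i}. x < j}" using assms by auto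
  moreover have "finite {x\<in>T - {i}. x < j}" using assms(1) by simp
  ultimately show ?thesis using True by (simp add: pos_sign_def)
next
  case False
  then have "{x\<in>T - {i}. x < j} = {x\<in>T. x < j}" using assms by auto
  then show ?thesis using False by (simp add: pos_sign_def)
qed

lemma pos_sign_exchange:
  assumes "finite T" "i \<in> T" "j \<notin> T"
  shows "pos_sign T i * pos_sign (T - {i}) j = - (pos_sign T j * pos_sign (insert j T) i)"
proof -
  have ij: "i \<noteq> j" using assms by auto
  define s1 :: complex where "s1 = (if i < j then -1 else 1)"
  define s2 :: complex where "s2 = (if j < i then -1 else 1)"
  have "insert j T - {j} = T" using assms(3) by blast
  then have 1: "pos_sign (insert j T) i = s2 * pos_sign T i"
    using pos_sign_remove[of "insert j T" j i] assms(1) ij unfolding s2_def by simp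
  have 2: "pos_sign T j = s1 * pos_sign (T - {i}) j"
    unfolding s1_def by (rule pos_sign_remove[OF assms(1,2) ij[symmetric]])
  have "s1 * s2 = -1"
    using ij unfolding s1_def s2_def by (cases "i < j") auto
  then have "s1 * (s2 * x) = - x" for x :: complex
    by (simp add: mult.assoc[symmetric])
  moreover have "pos_sign T j * pos_sign (insert j T) i
      = s1 * (s2 * (pos_sign T i * pos_sign (T - {i}) j))"
    unfolding 1 2 by (simp only: mult_ac)
  ultimately show ?thesis by simp
qed

lemma single_pos_sign_square:
  "Poly_Mapping.single 0 (pos_sign S i) * Poly_Mapping.single 0 (pos_sign S i) = 1"
  by (simp add: mult_single pos_sign_def power_mult_distrib[symmetric])

lemma single_pos_sign_exchange:
  fixes T :: "'n::{finite,linorder} set"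
  assumes "i \<in> T" "j \<notin> T"
  shows "Poly_Mapping.single 0 (pos_sign T i) * Poly_Mapping.single 0 (pos_sign (T - {i}) j)
    = - (Poly_Mapping.single 0 (pos_sign T j) * Poly_Mapping.single 0 (pos_sign (insert j T) i)
        :: 'n mpoly)"
  using pos_sign_exchange[OF finite assms] by (simp add: mult_single single_uminus)

lemma d_wedge_contraction_expand:
  fixes \<eta> :: "'n::{finite,linorder} form"
  shows "d_wedge f (contraction \<eta> \<theta>) T
    = (\<Sum>i\<in>T. mp_pderiv i f * \<theta> i * \<eta> T)
    + (\<Sum>i\<in>T. \<Sum>j\<in>UNIV - T.
        Poly_Mapping.single 0 (pos_sign T i) * Poly_Mapping.single 0 (pos_sign (T - {i}) j)
          * mp_pderiv i f * \<theta> j * \<eta> (insert j (T - {i})))"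
proof -
  let ?c = "\<lambda>S i. Poly_Mapping.single 0 (pos_sign S i) :: 'n mpoly"
  have "?c T i * mp_pderiv i f * contraction \<eta> \<theta> (T - {i})
      = mp_pderiv i f * \<theta> i * \<eta> T
      + (\<Sum>j\<in>UNIV - T. ?c T i * ?c (T - {i}) j * mp_pderiv i f * \<theta> j * \<eta> (insert j (T - {i})))"
    if i: "i \<in> T" for i
  proof -
    have "UNIV - (T - {i}) = insert i (UNIV - T)" "i \<notin> UNIV - T" "insert i (T - {i}) = T"
      using i by auto
    then have "?c T i * mp_pderiv i f * contraction \<eta> \<theta> (T - {i})
      = (?c T i * ?c T i) * (mp_pderiv i f * \<theta> i * \<eta> T)
      + (\<Sum>j\<in>UNIV - T. ?c T i * ?c (T - {i}) j * mp_pderiv i f * \<theta> j * \<eta> (insert j (T - {i})))"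
      by (simp add: contraction_def pos_sign_remove_self sum_distrib_left distrib_left mult_ac)
    then show ?thesis by (simp add: single_pos_sign_square)
  qed
  then show ?thesis
    by (simp add: d_wedge_def sum.distrib)
qed

lemma contraction_d_wedge_expand:
  fixes \<eta> :: "'n::{finite,linorder} form"
  shows "contraction (d_wedge f \<eta>) \<theta> T
    = (\<Sum>j\<in>UNIV - T. mp_pderiv j f * \<theta> j * \<eta> T)
    + (\<Sum>j\<in>UNIV - T. \<Sum>i\<in>T.
        Poly_Mapping.single 0 (pos_sign T j) * Poly_Mapping.single 0 (pos_sign (insert j T) i)
          * mp_pderiv i f * \<theta> j * \<eta> (insert j T - {i}))"
proof -
  let ?c = "\<lambda>S i. Poly_Mapping.single 0 (pos_sign S i) :: 'n mpoly"
  have "?c T j * \<theta> j * d_wedge f \<eta> (insert j T)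
      = mp_pderiv j f * \<theta> j * \<eta> T
      + (\<Sum>i\<in>T. ?c T j * ?c (insert j T) i * mp_pderiv i f * \<theta> j * \<eta> (insert j T - {i}))"
    if j: "j \<in> UNIV - T" for j
  proof -
    have "j \<notin> T" "insert j T - {j} = T" using j by auto
    then have "?c T j * \<theta> j * d_wedge f \<eta> (insert j T)
      = (?c T j * ?c T j) * (mp_pderiv j f * \<theta> j * \<eta> T)
      + (\<Sum>i\<in>T. ?c T j * ?c (insert j T) i * mp_pderiv i f * \<theta> j * \<eta> (insert j T - {i}))"
      by (simp add: d_wedge_def pos_sign_insert_self sum_distrib_left distrib_left mult_ac)
    then show ?thesis by (simp add: single_pos_sign_square)
  qed
  then show ?thesis
    by (simp add: contraction_def sum.distrib)
qed

lemma d_wedge_contraction_anticommutator: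
  fixes \<eta> :: "'n::{finite,linorder} form"
  shows "d_wedge f (contraction \<eta> \<theta>) T + contraction (d_wedge f \<eta>) \<theta> T = vf_apply \<theta> f * \<eta> T"
proof -
  let ?c = "\<lambda>S i. Poly_Mapping.single 0 (pos_sign S i) :: 'n mpoly"
  define U where "U = UNIV - T"
  have "?c T j * ?c (insert j T) i * mp_pderiv i f * \<theta> j * \<eta> (insert j T - {i})
      = - (?c T i * ?c (T - {i}) j * mp_pderiv i f * \<theta> j * \<eta> (insert j (T - {i})))"
    if "i \<in> T" "j \<in> U" for i j
  proof -
    have "insert j T - {i} = insert j (T - {i})" using that by (auto simp: U_def)
    then show ?thesis using single_pos_sign_exchange[of i T j] that by (simp add: U_def)
  qed
  then have cross_terms_cancel:
    "(\<Sum>i\<in>T. \<Sum>j\<in>U. ?c T i * ?c (T - {i}) j * mp_pderiv i f * \<theta> j * \<eta> (insert j (T - {i})))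
     + (\<Sum>j\<in>U. \<Sum>i\<in>T. ?c T j * ?c (insert j T) i * mp_pderiv i f * \<theta> j * \<eta> (insert j T - {i}))
     = 0"
    by (simp add: sum.swap[of _ U T] sum_negf sum.distrib[symmetric])
  have "vf_apply \<theta> f * \<eta> T = (\<Sum>i\<in>T \<union> U. mp_pderiv i f * \<theta> i * \<eta> T)"
    by (simp add: vf_apply_def U_def sum_distrib_left mult_ac)
  also have "\<dots> = (\<Sum>i\<in>T. mp_pderiv i f * \<theta> i * \<eta> T) + (\<Sum>j\<in>U. mp_pderiv j f * \<theta> j * \<eta> T)"
    by (rule sum.union_disjoint) (auto simp: U_def)
  finally show ?thesis
    using cross_terms_cancel
    by (simp add: d_wedge_contraction_expand contraction_d_wedge_expand U_def[symmetric] algebra_simps)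
qed

lemma gen_ideal_zero: "0 \<in> gen_ideal h k"
  unfolding gen_ideal_def by (auto intro: exI[of _ "\<lambda>_. 0"])

lemma gen_ideal_add: "p \<in> gen_ideal h k \<Longrightarrow> q \<in> gen_ideal h k \<Longrightarrow> p + q \<in> gen_ideal h k"
  unfolding gen_ideal_def
proof clarsimp
  fix a b
  show "\<exists>c. (\<Sum>i<k. a i * h i) + (\<Sum>i<k. b i * h i) = (\<Sum>i<k. c i * h i)"
    by (rule exI[of _ "\<lambda>i. a i + b i"]) (simp add: sum.distrib distrib_right)
qed

lemma gen_ideal_mult_left: "p \<in> gen_ideal h k \<Longrightarrow> r * p \<in> gen_ideal h k"
  unfolding gen_ideal_def
proof clarsimp
  fix a
  show "\<exists>c. r * (\<Sum>i<k. a i * h i) = (\<Sum>i<k. c i * h i)"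
    by (rule exI[of _ "\<lambda>i. r * a i"]) (simp add: sum_distrib_left mult.assoc)
qed

lemma gen_ideal_diff: "p \<in> gen_ideal h k \<Longrightarrow> q \<in> gen_ideal h k \<Longrightarrow> p - q \<in> gen_ideal h k"
  using gen_ideal_add[of p h k "(-1) * q"] gen_ideal_mult_left[of q h k "-1"] by simp

lemma gen_ideal_sum:
  "finite A \<Longrightarrow> (\<And>x. x \<in> A \<Longrightarrow> g x \<in> gen_ideal h k) \<Longrightarrow> sum g A \<in> gen_ideal h k"
  by (induct A rule: finite_induct) (auto intro: gen_ideal_add gen_ideal_zero)

lemma is_form_contraction:
  fixes \<eta> :: "'n::{finite,linorder} form"
  assumes "is_form q \<eta>"
  shows "is_form (q - 1) (contraction \<eta> \<theta>)"
  unfolding is_form_def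
proof (intro allI impI)
  fix S :: "'n set"
  assume "card S \<noteq> q - 1"
  then have "card (insert i S) \<noteq> q" if "i \<in> UNIV - S" for i
    using that by auto
  then show "contraction \<eta> \<theta> S = 0"
    using assms by (simp add: is_form_def contraction_def)
qed

lemma form_in_gen_ideal_contraction:
  fixes w :: "'n::{finite,linorder} form"
  assumes "form_in (gen_ideal h k) w"
  shows "form_in (gen_ideal h k) (contraction w \<theta>)"
  using assms unfolding form_in_def contraction_def
  by (auto intro!: gen_ideal_sum gen_ideal_mult_left)

lemma mult_contraction:
  fixes \<eta> :: "'n::{finite,linorder} form"
  shows "f * contraction \<eta> \<theta> S = contraction (\<lambda>S. f * \<eta> S) \<theta> S"
  unfolding contraction_def by (simp add: sum_distrib_left mult_ac)

lemma contraction_log_forms_num: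
  fixes \<eta> :: "'n::{finite,linorder} form"
  assumes \<eta>: "\<eta> \<in> log_forms_num IX (gen_ideal h k) q"
    and \<theta>: "\<theta> \<in> der_log IX"
  shows "contraction \<eta> \<theta> \<in> log_forms_num IX (gen_ideal h k) (q - 1)"
proof -
  let ?I = "gen_ideal h k"
  have mult_in: "form_in ?I (\<lambda>S. f * \<eta> S)" and d_wedge_in: "form_in ?I (d_wedge f \<eta>)"
    if "f \<in> IX" for f
    using \<eta> that by (auto simp: log_forms_num_def)
  have "form_in ?I (d_wedge f (contraction \<eta> \<theta>))" if f: "f \<in> IX" for f
    unfolding form_in_def
  proof
    fix T
    have "d_wedge f (contraction \<eta> \<theta>) T = vf_apply \<theta> f * \<eta> T - contraction (d_wedge f \<eta>) \<theta> T"
      using d_wedge_contraction_anticommutator[of f \<eta> \<theta> T] by (simp add: eq_diff_eq)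
    moreover have "vf_apply \<theta> f * \<eta> T \<in> ?I"
      using mult_in[of "vf_apply \<theta> f"] \<theta> f by (simp add: der_log_def form_in_def)
    moreover have "contraction (d_wedge f \<eta>) \<theta> T \<in> ?I"
      using form_in_gen_ideal_contraction[OF d_wedge_in[OF f]] by (simp add: form_in_def)
    ultimately show "d_wedge f (contraction \<eta> \<theta>) T \<in> ?I"
      by (simp add: gen_ideal_diff)
  qed
  moreover have "form_in ?I (\<lambda>S. f * contraction \<eta> \<theta> S)" if "f \<in> IX" for f
    using form_in_gen_ideal_contraction[OF mult_in[OF that]] by (simp add: mult_contraction)
  moreover have "is_form (q - 1) (contraction \<eta> \<theta>)"
    using \<eta> unfolding log_forms_num_def by (blast intro: is_form_contraction)
  ultimately show ?thesis
    by (simp add: log_forms_num_def)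
qed

theorem lemma3p7:
  fixes X C :: "(complex ^ ('n::{finite,linorder})) set set"
    and k q :: nat and hs :: "nat \<Rightarrow> 'n mpoly"
    and \<eta> :: "'n form" and \<theta> :: "'n \<Rightarrow> 'n mpoly"
  assumes X_arr: "finite X" "\<forall>L\<in>X. codim_subspace k L"
    and C_arr: "finite C" "\<forall>L\<in>C. codim_subspace k L" and XC: "X \<subseteq> C"
    and IC: "vanishing_ideal (\<Union>C) = gen_ideal hs k" "radical (gen_ideal hs k)"
    and hs_X: "\<forall>j<k. hs j \<in> vanishing_ideal (\<Union>X)"
    and hs_hom: "\<forall>j<k. mp_homogeneous (hs j)"
    and hs_reg: "regular_sequence hs k"
    and omega: "\<eta> \<in> log_forms_num (vanishing_ideal (\<Union>X)) (gen_ideal hs k) q"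
    and theta: "\<theta> \<in> der_log (vanishing_ideal (\<Union>X))"
  shows "contraction \<eta> \<theta> \<in> log_forms_num (vanishing_ideal (\<Union>X)) (gen_ideal hs k) (q - 1)"
  using omega theta by (rule contraction_log_forms_num)

end
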